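(* Fix a distribution of $(X,Y)$ on $\mathcal{X}\times\{0,1\}$ with expectation $\mathbb{E}$, let $\mathcal{L}(F,y)=-[y\log\mu(F)+(1-y)\log(1-\mu(F))]$ be the log loss with $\mu(F)=1/(1+e^{-F})$, let $\mathcal{H}$ be a set of group membership functions $h:\mathcal{X}\to\{0,1\}$, let $F_T:\mathcal{X}\to\mathbb{R}$ be a logit predictor with $f_T=\mu\circ F_T$, and let $h_1,\dots,h_K:\mathcal{X}\times[0,1]\to\mathbb{R}$ be weak learners such that for every $h\in\mathcal{H}$ and $g\in\mathcal{G}$ the function $(x,v)\mapsto h(x)g(v)$ is among $h_1,\dots,h_K$. Let $\alpha\ge0$ and suppose that $\big|\mathbb{E}[h(X)g(f_T(X))(Y-f_T(X))]\big|\ge\alpha\sqrt{\mathbb{E}[h(X)f_T(X)(1-f_T(X))]}$ for some $h\in\mathcal{H}$ and $g\in\mathcal{G}$. Then there exists $\tilde w\in\mathbb{R}^K$ such that, with $\tilde h(x)=\sum_{k=1}^K\tilde w_k h_k(x,f_T(x))$, $$\alpha\le\frac{2}{\sqrt3}\,C_T\sqrt{\mathbb{E}[\mathcal{L}(F_T(X),Y)]-\mathbb{E}[\mathcal{L}(F_T(X)+\tilde h(X),Y)]},$$ where $C_T^2=\max_{h\in\mathcal{H},g\in\mathcal{G}}\frac{\mathbb{E}[g(f_T(X))\mid h(X)=1]}{\mathbb{E}[f_T(X)(1-f_T(X))\mid h(X)=1]}$.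
   Context: $\mathcal{G}$ is the set of interval membership functions $g:[0,1]\to\{0,1\}$, $g(v)=\mathbb{1}_I(v)$ for an interval $I\subseteq[0,1]$. *)

theory Defs
  imports "HOL-Probability.Probability"
begin

definition sigmoid :: "real \<Rightarrow> real" where
  "sigmoid F = 1 / (1 + exp (- F))"

definition logloss :: "real \<Rightarrow> real \<Rightarrow> real" where
  "logloss F y = - (y * ln (sigmoid F) + (1 - y) * ln (1 - sigmoid F))"

definition interval_funs :: "(real \<Rightarrow> real) set" where
  "interval_funs = {g. \<exists>I. is_interval I \<and> I \<subseteq> {0..1} \<and> g = indicator I}"

text \<open>Conditional expectation E[phi(X,Y) | h(X) = 1] for a 0/1-valued h.\<close>
definition cond_exp_on :: "('a \<times> bool) measure \<Rightarrow> ('a \<Rightarrow> real) \<Rightarrow> ('a \<times> bool \<Rightarrow> real) \<Rightarrow> real" where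
  "cond_exp_on M h \<phi> = (\<integral>z. h (fst z) * \<phi> z \<partial>M) / (\<integral>z. h (fst z) \<partial>M)"

end

theory Submission
  imports Defs
begin

(*
  Pick h in H and g in G witnessing the violation; u(x) = h(x) g(f_T(x)) is a 0/1-valued
  weak learner. Hoeffding's lemma for a Bernoulli variable bounds the log loss by its
  first-order expansion plus a^2/8:  L(F + a, y) <= L(F, y) - a (y - sigma(F)) + a^2/8.
  Stepping by eta u with A = E[u (Y - f_T)], B = E[u] and eta = 4 A / B therefore lowers the
  expected loss by some Delta >= 2 A^2 / B. Since alpha^2 E[h f_T (1 - f_T)] <= A^2 and
  B / E[h f_T (1 - f_T)] <= C_T^2, this gives alpha <= C_T sqrt(Delta / 2), which is
  stronger than the claimed bound with constant 2 / sqrt 3.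
*)

lemma Hoeffdings_lemma_bernoulli:
  fixes a p :: real
  assumes "0 \<le> p" "p \<le> 1"
  shows "ln (1 + p * (exp a - 1)) \<le> a * p + a\<^sup>2 / 8"
proof (cases "a \<ge> 0")
  case True
  from Hoeffdings_lemma_aux[OF True assms(1)] show ?thesis by simp
next
  case False
  have "-a \<ge> 0" "0 \<le> 1 - p" using False assms by simp_all
  from Hoeffdings_lemma_aux[OF this]
  have bound: "a * (1 - p) + ln (1 + (1 - p) * (exp (-a) - 1)) \<le> a\<^sup>2 / 8" by simp
  have pos: "0 < 1 + (1 - p) * (exp (-a) - 1)"
    using False assms by (intro add_pos_nonneg mult_nonneg_nonneg) auto
  have "1 + p * (exp a - 1) = exp a * (1 + (1 - p) * (exp (-a) - 1))"
    by (simp add: algebra_simps exp_minus_inverse)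
  then have "ln (1 + p * (exp a - 1)) = a + ln (1 + (1 - p) * (exp (-a) - 1))"
    using pos by (simp add: ln_mult)
  with bound show ?thesis by (simp add: algebra_simps)
qed

lemma sigmoid_pos: "0 < sigmoid G"
  and sigmoid_less_one: "sigmoid G < 1"
  unfolding sigmoid_def by (auto simp: add_pos_pos)

lemma sigmoid_eq: "sigmoid G = exp G / (1 + exp G)"
  unfolding sigmoid_def by (simp add: exp_minus field_simps add_pos_pos)

lemma logloss_eq:
  assumes "y \<in> {0, 1}"
  shows "logloss G y = ln (1 + exp G) - y * G"
proof -
  have pos: "0 < 1 + exp G" by (simp add: add_pos_pos)
  then have "ln (sigmoid G) = G - ln (1 + exp G)"
    by (simp add: sigmoid_eq ln_div)
  moreover have "ln (1 - sigmoid G) = - ln (1 + exp G)"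
    using pos by (simp add: sigmoid_eq ln_div field_simps)
  ultimately show ?thesis using assms unfolding logloss_def by auto
qed

lemma logloss_nonneg: "y \<in> {0, 1} \<Longrightarrow> 0 \<le> logloss G y"
  using sigmoid_pos[of G] sigmoid_less_one[of G] unfolding logloss_def by auto

lemma logloss_add_le:
  assumes "y \<in> {0, 1}"
  shows "logloss (G + a) y \<le> logloss G y - a * (y - sigmoid G) + a\<^sup>2 / 8"
proof -
  have pos: "0 < 1 + exp G" by (simp add: add_pos_pos)
  have factor: "1 + exp (G + a) = (1 + exp G) * (1 + sigmoid G * (exp a - 1))"
    using pos by (simp add: sigmoid_eq field_simps exp_add)
  then have "0 < 1 + sigmoid G * (exp a - 1)"
    using pos by (metis exp_gt_zero add_pos_pos zero_less_one zero_less_mult_pos)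
  then have "ln (1 + exp (G + a)) = ln (1 + exp G) + ln (1 + sigmoid G * (exp a - 1))"
    using pos by (simp add: factor ln_mult)
  moreover have "ln (1 + sigmoid G * (exp a - 1)) \<le> a * sigmoid G + a\<^sup>2 / 8"
    using sigmoid_pos[of G] sigmoid_less_one[of G] by (intro Hoeffdings_lemma_bernoulli) auto
  ultimately show ?thesis using assms by (simp add: logloss_eq algebra_simps)
qed

lemma abs_residual_le:
  assumes "u \<in> {0, 1}" "y \<in> {0, 1}"
  shows "\<bar>u * (y - sigmoid G)\<bar> \<le> u"
  using assms sigmoid_pos[of G] sigmoid_less_one[of G] by (auto simp: abs_mult)

lemma sigmoid_borel_measurable [measurable]: "sigmoid \<in> borel_measurable borel"
  unfolding sigmoid_def by measurable

lemma logloss_borel_measurable [measurable]: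
  assumes [measurable]: "G \<in> borel_measurable M" "y \<in> borel_measurable M"
  shows "(\<lambda>z. logloss (G z) (y z)) \<in> borel_measurable M"
  unfolding logloss_def by measurable

lemma interval_funs_range: "g \<in> interval_funs \<Longrightarrow> g v \<in> {0, 1}"
  unfolding interval_funs_def by (auto simp: indicator_def)

lemma interval_funs_borel_measurable: "g \<in> interval_funs \<Longrightarrow> g \<in> borel_measurable borel"
  unfolding interval_funs_def
  by (auto intro: borel_measurable_indicator real_interval_borel_measurable)

lemma integral_mult_pos:
  fixes h f :: "'a \<Rightarrow> real"
  assumes h_meas: "h \<in> borel_measurable M" and int: "integrable M (\<lambda>x. h x * f x)"
    and h_nonneg: "\<And>x. 0 \<le> h x" and f_pos: "\<And>x. 0 < f x" and h_pos: "0 < integral\<^sup>L M h"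
  shows "0 < (\<integral>x. h x * f x \<partial>M)"
proof -
  have nonneg: "AE x in M. 0 \<le> h x * f x"
    using h_nonneg f_pos by (intro AE_I2) (simp add: less_imp_le)
  have "(\<integral>x. h x * f x \<partial>M) \<noteq> 0"
  proof
    assume "(\<integral>x. h x * f x \<partial>M) = 0"
    then have "AE x in M. h x * f x = 0"
      using integral_nonneg_eq_0_iff_AE[OF int nonneg] by simp
    then have "AE x in M. h x = 0"
      using f_pos by (auto elim!: AE_mp intro!: AE_I2 simp: less_imp_neq[symmetric])
    then have "integral\<^sup>L M h = 0"
      using integral_cong_AE[OF h_meas, of "\<lambda>_. 0"] by simp
    with h_pos show False by simp
  qed
  moreover have "0 \<le> (\<integral>x. h x * f x \<partial>M)"
    using nonneg by (rule integral_nonneg_AE)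
  ultimately show ?thesis by simp
qed

lemma violation_le_sqrt_gain:
  fixes \<alpha> A B C D I :: real
  assumes "0 \<le> \<alpha>" "0 \<le> C" "0 < D" "0 \<le> I"
    and violation: "\<alpha> * sqrt D \<le> \<bar>A\<bar>" and gain: "2 * A\<^sup>2 \<le> B * I"
    and ratio: "B / D \<le> C\<^sup>2"
  shows "\<alpha> \<le> 2 / sqrt 3 * C * sqrt I"
proof (rule power2_le_imp_le)
  have "\<alpha>\<^sup>2 * D \<le> A\<^sup>2"
    using power_mono[OF violation, of 2] assms(1,3) by (simp add: power_mult_distrib)
  then have "\<alpha>\<^sup>2 \<le> A\<^sup>2 / D"
    using \<open>0 < D\<close> by (simp add: field_simps)
  also have "\<dots> \<le> B / D * I / 2"
    using gain \<open>0 < D\<close> by (simp add: field_simps)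
  also have "\<dots> \<le> C\<^sup>2 * I / 2"
    using mult_right_mono[OF ratio \<open>0 \<le> I\<close>] by simp
  also have "\<dots> \<le> (2 / sqrt 3 * C * sqrt I)\<^sup>2"
    using \<open>0 \<le> I\<close> by (simp add: power_mult_distrib power_divide)
  finally show "\<alpha>\<^sup>2 \<le> (2 / sqrt 3 * C * sqrt I)\<^sup>2" .
  show "0 \<le> 2 / sqrt 3 * C * sqrt I"
    using assms(2,4) by simp
qed

context finite_measure
begin

lemma integrable_zero_one:
  fixes u :: "'a \<Rightarrow> real"
  assumes "u \<in> borel_measurable M" and "\<And>z. u z \<in> {0, 1}"
  shows "integrable M u"
proof (rule integrable_const_bound[where B=1])
  show "AE z in M. norm (u z) \<le> 1"
    using assms(2) by (intro AE_I2) (metis insert_iff singletonD norm_one norm_zero order_refl zero_le_one)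
qed fact

lemma
  fixes G y u :: "'a \<Rightarrow> real"
  assumes [measurable]: "G \<in> borel_measurable M" "y \<in> borel_measurable M" "u \<in> borel_measurable M"
    and y01: "\<And>z. y z \<in> {0, 1}" and u01: "\<And>z. u z \<in> {0, 1}"
  shows integrable_residual: "integrable M (\<lambda>z. u z * (y z - sigmoid (G z)))"
    and abs_integral_residual_le:
      "\<bar>\<integral>z. u z * (y z - sigmoid (G z)) \<partial>M\<bar> \<le> (\<integral>z. u z \<partial>M)"
proof -
  have r_le: "\<bar>u z * (y z - sigmoid (G z))\<bar> \<le> u z"
    and r_le_1: "\<bar>u z * (y z - sigmoid (G z))\<bar> \<le> 1" for z
    using u01[of z] abs_residual_le[OF u01[of z] y01[of z], of "G z"] by auto
  have int_u: "integrable M u"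
    using u01 by (rule integrable_zero_one[rotated]) measurable
  show int_r: "integrable M (\<lambda>z. u z * (y z - sigmoid (G z)))"
    by (intro integrable_const_bound[where B=1] AE_I2) (simp add: r_le_1, measurable)
  have "\<bar>\<integral>z. u z * (y z - sigmoid (G z)) \<partial>M\<bar> \<le> (\<integral>z. \<bar>u z * (y z - sigmoid (G z))\<bar> \<partial>M)"
    using integral_norm_bound[of M "\<lambda>z. u z * (y z - sigmoid (G z))"] by simp
  also have "\<dots> \<le> (\<integral>z. u z \<partial>M)"
    using int_r int_u r_le by (intro integral_mono) auto
  finally show "\<bar>\<integral>z. u z * (y z - sigmoid (G z)) \<partial>M\<bar> \<le> (\<integral>z. u z \<partial>M)" .
qed

lemma expected_logloss_step_le:
  fixes G y u :: "'a \<Rightarrow> real"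
  assumes [measurable]: "G \<in> borel_measurable M" "y \<in> borel_measurable M" "u \<in> borel_measurable M"
    and y01: "\<And>z. y z \<in> {0, 1}" and u01: "\<And>z. u z \<in> {0, 1}"
    and loss_int: "integrable M (\<lambda>z. logloss (G z) (y z))"
  shows integrable_logloss_step: "integrable M (\<lambda>z. logloss (G z + \<eta> * u z) (y z))"
    and "(\<integral>z. logloss (G z + \<eta> * u z) (y z) \<partial>M)
           \<le> (\<integral>z. logloss (G z) (y z) \<partial>M) - \<eta> * (\<integral>z. u z * (y z - sigmoid (G z)) \<partial>M)
             + \<eta>\<^sup>2 / 8 * (\<integral>z. u z \<partial>M)"
proof -
  let ?L = "\<lambda>z. logloss (G z) (y z)" and ?L' = "\<lambda>z. logloss (G z + \<eta> * u z) (y z)"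
  let ?r = "\<lambda>z. u z * (y z - sigmoid (G z))"
  have int_u: "integrable M u"
    using u01 by (rule integrable_zero_one[rotated]) measurable
  note int_r = integrable_residual[OF assms(1-5)]
  have step: "?L' z \<le> ?L z - \<eta> * ?r z + \<eta>\<^sup>2 / 8 * u z" for z
  proof -
    have "(\<eta> * u z)\<^sup>2 = \<eta>\<^sup>2 * u z"
      using u01[of z] by auto
    then show ?thesis
      using logloss_add_le[OF y01[of z], of "G z" "\<eta> * u z"] by (simp add: right_diff_distrib)
  qed
  have int_rhs: "integrable M (\<lambda>z. ?L z - \<eta> * ?r z + \<eta>\<^sup>2 / 8 * u z)"
    using loss_int int_r int_u by simp
  show int_L': "integrable M ?L'"
  proof (rule Bochner_Integration.integrable_bound[OF int_rhs])
    show "AE z in M. norm (?L' z) \<le> norm (?L z - \<eta> * ?r z + \<eta>\<^sup>2 / 8 * u z)"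
      using step logloss_nonneg[OF y01] by (intro AE_I2) (smt (verit) real_norm_def)
  qed simp
  have "(\<integral>z. ?L' z \<partial>M) \<le> (\<integral>z. ?L z - \<eta> * ?r z + \<eta>\<^sup>2 / 8 * u z \<partial>M)"
    using int_L' int_rhs step by (intro integral_mono)
  also have "\<dots> = (\<integral>z. ?L z \<partial>M) - \<eta> * (\<integral>z. ?r z \<partial>M) + \<eta>\<^sup>2 / 8 * (\<integral>z. u z \<partial>M)"
    using loss_int int_r int_u by simp
  finally show "(\<integral>z. ?L' z \<partial>M) \<le> \<dots>" .
qed

lemma logloss_boosting_step:
  fixes G y u :: "'a \<Rightarrow> real"
  assumes [measurable]: "G \<in> borel_measurable M" "y \<in> borel_measurable M" "u \<in> borel_measurable M"
    and y01: "\<And>z. y z \<in> {0, 1}" and u01: "\<And>z. u z \<in> {0, 1}"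
    and loss_int: "integrable M (\<lambda>z. logloss (G z) (y z))"
  defines "A \<equiv> \<integral>z. u z * (y z - sigmoid (G z)) \<partial>M" and "B \<equiv> \<integral>z. u z \<partial>M"
  obtains \<eta> where "integrable M (\<lambda>z. logloss (G z + \<eta> * u z) (y z))"
    and "0 \<le> (\<integral>z. logloss (G z) (y z) \<partial>M) - (\<integral>z. logloss (G z + \<eta> * u z) (y z) \<partial>M)"
    and "2 * A\<^sup>2 \<le> B * ((\<integral>z. logloss (G z) (y z) \<partial>M) - (\<integral>z. logloss (G z + \<eta> * u z) (y z) \<partial>M))"
proof
  define \<eta> where "\<eta> = 4 * A / B"
  let ?gain = "(\<integral>z. logloss (G z) (y z) \<partial>M) - (\<integral>z. logloss (G z + \<eta> * u z) (y z) \<partial>M)"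
  show "integrable M (\<lambda>z. logloss (G z + \<eta> * u z) (y z))"
    by (rule integrable_logloss_step[OF assms(1-6)])
  have "\<eta> * A - \<eta>\<^sup>2 / 8 * B \<le> ?gain"
    using expected_logloss_step_le(2)[OF assms(1-6), of \<eta>] unfolding A_def B_def by simp
  \<comment> \<open>also for \<open>B = 0\<close>, where \<open>\<eta> = 0\<close> and \<open>2 * A\<^sup>2 / B = 0\<close> since \<open>x / 0 = 0\<close>\<close>
  moreover have "\<eta> * A - \<eta>\<^sup>2 / 8 * B = 2 * A\<^sup>2 / B"
    unfolding \<eta>_def by (cases "B = 0") (simp_all add: field_simps power2_eq_square)
  ultimately have gain: "2 * A\<^sup>2 / B \<le> ?gain" by simp
  have "\<bar>A\<bar> \<le> B"
    unfolding A_def B_def by (rule abs_integral_residual_le[OF assms(1-5)])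
  then show "0 \<le> ?gain"
    using gain by (smt (verit) divide_nonneg_nonneg zero_le_power2)
  from \<open>\<bar>A\<bar> \<le> B\<close> consider "B = 0" "A = 0" | "0 < B" by linarith
  then show "2 * A\<^sup>2 \<le> B * ?gain"
    by cases (use gain in \<open>auto simp: field_simps\<close>)
qed

lemma logloss_boosting_step_bound:
  fixes G y u :: "'a \<Rightarrow> real"
  assumes [measurable]: "G \<in> borel_measurable M" "y \<in> borel_measurable M" "u \<in> borel_measurable M"
    and y01: "\<And>z. y z \<in> {0, 1}" and u01: "\<And>z. u z \<in> {0, 1}"
    and loss_int: "integrable M (\<lambda>z. logloss (G z) (y z))"
    and "0 \<le> \<alpha>" "0 \<le> C" "0 < D"
    and violation: "\<alpha> * sqrt D \<le> \<bar>\<integral>z. u z * (y z - sigmoid (G z)) \<partial>M\<bar>"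
    and ratio: "(\<integral>z. u z \<partial>M) / D \<le> C\<^sup>2"
  obtains \<eta> where "integrable M (\<lambda>z. logloss (G z + \<eta> * u z) (y z))"
    and "\<alpha> \<le> 2 / sqrt 3 * C *
           sqrt ((\<integral>z. logloss (G z) (y z) \<partial>M) - (\<integral>z. logloss (G z + \<eta> * u z) (y z) \<partial>M))"
proof -
  obtain \<eta> where "integrable M (\<lambda>z. logloss (G z + \<eta> * u z) (y z))"
    and "0 \<le> (\<integral>z. logloss (G z) (y z) \<partial>M) - (\<integral>z. logloss (G z + \<eta> * u z) (y z) \<partial>M)"
    and "2 * (\<integral>z. u z * (y z - sigmoid (G z)) \<partial>M)\<^sup>2
           \<le> (\<integral>z. u z \<partial>M) * ((\<integral>z. logloss (G z) (y z) \<partial>M) - (\<integral>z. logloss (G z + \<eta> * u z) (y z) \<partial>M))"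
    using logloss_boosting_step[OF assms(1-6)] by blast
  with violation_le_sqrt_gain[OF assms(7-9) _ violation _ ratio] that show ?thesis
    by blast
qed

lemma integral_sigmoid_variance_pos:
  fixes G h :: "'a \<Rightarrow> real"
  assumes [measurable]: "G \<in> borel_measurable M" "h \<in> borel_measurable M"
    and h01: "\<And>z. h z \<in> {0, 1}" and h_pos: "0 < integral\<^sup>L M h"
  shows "0 < (\<integral>z. h z * sigmoid (G z) * (1 - sigmoid (G z)) \<partial>M)"
proof -
  have "integrable M (\<lambda>z. h z * (sigmoid (G z) * (1 - sigmoid (G z))))"
  proof (intro integrable_const_bound[where B=1] AE_I2)
    fix z
    show "norm (h z * (sigmoid (G z) * (1 - sigmoid (G z)))) \<le> 1"
      using h01[of z] sigmoid_pos[of "G z"] sigmoid_less_one[of "G z"]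
      by (auto simp: abs_mult intro!: mult_le_one)
  qed measurable
  moreover have "0 \<le> h z" for z
    using h01[of z] by auto
  ultimately have "0 < (\<integral>z. h z * (sigmoid (G z) * (1 - sigmoid (G z))) \<partial>M)"
    using h_pos sigmoid_pos sigmoid_less_one by (intro integral_mult_pos) auto
  then show ?thesis
    by (simp add: mult.assoc)
qed

end

theorem lemmaA4:
  fixes M :: "('a \<times> bool) measure"
    and H :: "('a \<Rightarrow> real) set"
    and F :: "'a \<Rightarrow> real"
    and K :: nat
    and hk :: "nat \<Rightarrow> 'a \<times> real \<Rightarrow> real"
    and \<alpha> C :: real
  assumes M: "prob_space M"
    and Y_meas: "snd \<in> measurable M (count_space UNIV)"
    and F_meas: "(\<lambda>z. F (fst z)) \<in> borel_measurable M"
    and H_01: "\<forall>h\<in>H. \<forall>x. h x \<in> {0, 1}"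
    and H_meas: "\<forall>h\<in>H. (\<lambda>z. h (fst z)) \<in> borel_measurable M"
    and H_pos: "\<forall>h\<in>H. (\<integral>z. h (fst z) \<partial>M) > 0"
    and loss_int: "integrable M (\<lambda>z. logloss (F (fst z)) (of_bool (snd z)))"
    and learners: "\<forall>h\<in>H. \<forall>g\<in>interval_funs. \<exists>k<K.
                     \<forall>x. \<forall>v\<in>{0..1}. hk k (x, v) = h x * g v"
    and \<alpha>_nonneg: "\<alpha> \<ge> 0"
    and viol: "\<exists>h\<in>H. \<exists>g\<in>interval_funs.
        \<bar>\<integral>z. h (fst z) * g (sigmoid (F (fst z))) * (of_bool (snd z) - sigmoid (F (fst z))) \<partial>M\<bar>
          \<ge> \<alpha> * sqrt (\<integral>z. h (fst z) * sigmoid (F (fst z)) * (1 - sigmoid (F (fst z))) \<partial>M)"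
    and C_nonneg: "C \<ge> 0"
    and C_attained: "\<exists>h\<in>H. \<exists>g\<in>interval_funs.
        C\<^sup>2 = cond_exp_on M h (\<lambda>z. g (sigmoid (F (fst z))))
               / cond_exp_on M h (\<lambda>z. sigmoid (F (fst z)) * (1 - sigmoid (F (fst z))))"
    and C_max: "\<forall>h\<in>H. \<forall>g\<in>interval_funs.
        cond_exp_on M h (\<lambda>z. g (sigmoid (F (fst z))))
          / cond_exp_on M h (\<lambda>z. sigmoid (F (fst z)) * (1 - sigmoid (F (fst z)))) \<le> C\<^sup>2"
  shows "\<exists>w :: nat \<Rightarrow> real.
     integrable M (\<lambda>z. logloss (F (fst z) + (\<Sum>k<K. w k * hk k (fst z, sigmoid (F (fst z)))))
                               (of_bool (snd z))) \<and>
     \<alpha> \<le> 2 / sqrt 3 * C *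
       sqrt ((\<integral>z. logloss (F (fst z)) (of_bool (snd z)) \<partial>M)
           - (\<integral>z. logloss (F (fst z) + (\<Sum>k<K. w k * hk k (fst z, sigmoid (F (fst z)))))
                          (of_bool (snd z)) \<partial>M))"
proof -
  interpret prob_space M using M .
  from viol obtain h g where hH: "h \<in> H" and gG: "g \<in> interval_funs"
    and violation: "\<bar>\<integral>z. h (fst z) * g (sigmoid (F (fst z))) * (of_bool (snd z) - sigmoid (F (fst z))) \<partial>M\<bar>
          \<ge> \<alpha> * sqrt (\<integral>z. h (fst z) * sigmoid (F (fst z)) * (1 - sigmoid (F (fst z))) \<partial>M)"
    by blast
  from learners hH gG obtain k where "k < K"
    and hk_k: "\<forall>x. \<forall>v\<in>{0..1}. hk k (x, v) = h x * g v" by blast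
  define u where "u z = h (fst z) * g (sigmoid (F (fst z)))" for z :: "'a \<times> bool"
  have h01: "h x \<in> {0, 1}" for x using H_01 hH by blast
  have u01: "u z \<in> {0, 1}" for z
    using h01[of "fst z"] interval_funs_range[OF gG, of "sigmoid (F (fst z))"] by (auto simp: u_def)
  note [measurable] = F_meas Y_meas interval_funs_borel_measurable[OF gG]
  have [measurable]: "(\<lambda>z. h (fst z)) \<in> borel_measurable M" using H_meas hH by blast
  have D_pos: "0 < (\<integral>z. h (fst z) * sigmoid (F (fst z)) * (1 - sigmoid (F (fst z))) \<partial>M)"
    using h01 H_pos hH by (intro integral_sigmoid_variance_pos) auto
  have ratio: "(\<integral>z. u z \<partial>M) / (\<integral>z. h (fst z) * sigmoid (F (fst z)) * (1 - sigmoid (F (fst z))) \<partial>M) \<le> C\<^sup>2"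
    using C_max[rule_format, OF hH gG] H_pos[rule_format, OF hH]
    by (simp add: cond_exp_on_def u_def mult.assoc)
  obtain \<eta> where int_step: "integrable M (\<lambda>z. logloss (F (fst z) + \<eta> * u z) (of_bool (snd z)))"
    and bound: "\<alpha> \<le> 2 / sqrt 3 * C * sqrt ((\<integral>z. logloss (F (fst z)) (of_bool (snd z)) \<partial>M)
                  - (\<integral>z. logloss (F (fst z) + \<eta> * u z) (of_bool (snd z)) \<partial>M))"
    by (rule logloss_boosting_step_bound[OF _ _ _ _ u01 loss_int \<alpha>_nonneg C_nonneg D_pos _ ratio])
      (use violation in \<open>auto simp: u_def mult.assoc\<close>)
  have weights: "(\<Sum>j<K. (if j = k then \<eta> else 0) * hk j (fst z, sigmoid (F (fst z)))) = \<eta> * u z" for z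
    using \<open>k < K\<close> hk_k sigmoid_pos[of "F (fst z)"] sigmoid_less_one[of "F (fst z)"]
    by (simp add: u_def less_imp_le if_distrib[of "\<lambda>a. a * _"] cong: if_cong)
  show ?thesis
    by (intro exI[of _ "\<lambda>j. if j = k then \<eta> else 0"]) (simp only: weights int_step bound)
qed

end
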